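(* For every return morphism $\sigma:\mathcal{A}^*\to\mathcal{A}^*$ and every total order $\le$ on $\mathcal{A}$, there exists a unique total order $\preceq$ on $\mathcal{A}$ such that $\sigma$ is left order preserving from $\preceq$ to $\le$; likewise there exists a unique total order $\preceq'$ on $\mathcal{A}$ such that $\sigma$ is right order preserving from $\preceq'$ to $\le$.
   Context: A return morphism for $w\in\mathcal{A}^+$ is an injective non-erasing morphism $\sigma:\mathcal{A}^*\to\mathcal{A}^*$ such that for each $a$, $\sigma(a)w$ contains exactly two occurrences of $w$, as proper prefix and proper suffix ($w$ taken of maximal length if unspecified). For $s,p\in\mathcal{A}^*$: $\mathcal{A}^L_{\sigma,s}=\{a:\sigma(a)\in\mathcal{A}^+s\}$, $\mathcal{A}^R_{\sigma,p}=\{a:\sigma(a)w\in p\mathcal{A}^+\}$; $\varphi^L_{\sigma,s}$ maps $a\in\mathcal{A}^L_{\sigma,s}$ to the letter $a'$ with $\sigma(a)\in\mathcal{A}^*a's$, $\varphi^R_{\sigma,p}$ maps $b\in\mathcal{A}^R_{\sigma,p}$ to the letter $b'$ with $\sigma(b)w\in pb'\mathcal{A}^*$. $\mathcal{T}^L(\sigma)$ is the set of longest common suffixes of $\sigma(a),\sigma(b)$ for $a\ne b$, $\mathcal{T}^R(\sigma)$ the set of longest common prefixes of $\sigma(a)w,\sigma(b)w$ for $a\ne b$. A partial map $\varphi$ is order preserving from $\preceq$ to $\le$ if $x\prec y$ implies $\varphi(x)\le\varphi(y)$ for all $x,y$ in its domain. $\sigma$ is left (resp. right) order preserving from $\preceq$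 to $\le$ if $\varphi^L_{\sigma,s}$ for every $s\in\mathcal{T}^L(\sigma)$ (resp. $\varphi^R_{\sigma,p}$ for every $p\in\mathcal{T}^R(\sigma)$) is order preserving from $\preceq$ to $\le$. *)

theory Defs
  imports Main "HOL-Library.Sublist"
begin

definition morph_ext :: "('a \<Rightarrow> 'a list) \<Rightarrow> 'a list \<Rightarrow> 'a list" where
  "morph_ext \<sigma> u = concat (map \<sigma> u)"

definition occ_at :: "'a list \<Rightarrow> 'a list \<Rightarrow> nat \<Rightarrow> bool" where
  "occ_at w u i \<longleftrightarrow> i + length w \<le> length u \<and> take (length w) (drop i u) = w"

definition return_morphism_for :: "('a \<Rightarrow> 'a list) \<Rightarrow> 'a list \<Rightarrow> bool" where
  "return_morphism_for \<sigma> w \<longleftrightarrow>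
     w \<noteq> [] \<and> inj (morph_ext \<sigma>) \<and> (\<forall>a. \<sigma> a \<noteq> []) \<and>
     (\<forall>a. {i. occ_at w (\<sigma> a @ w) i} = {0, length (\<sigma> a)})"

definition longest_common_suffix :: "'a list \<Rightarrow> 'a list \<Rightarrow> 'a list" where
  "longest_common_suffix xs ys = rev (longest_common_prefix (rev xs) (rev ys))"

definition AL :: "('a \<Rightarrow> 'a list) \<Rightarrow> 'a list \<Rightarrow> 'a set" where
  "AL \<sigma> s = {a. \<exists>u. u \<noteq> [] \<and> \<sigma> a = u @ s}"

definition AR :: "('a \<Rightarrow> 'a list) \<Rightarrow> 'a list \<Rightarrow> 'a list \<Rightarrow> 'a set" where
  "AR \<sigma> w p = {a. \<exists>u. u \<noteq> [] \<and> \<sigma> a @ w = p @ u}"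

text \<open>phiL sigma s a: the letter a' with sigma(a) in A^* a' s (meaningful on AL sigma s)\<close>
definition phiL :: "('a \<Rightarrow> 'a list) \<Rightarrow> 'a list \<Rightarrow> 'a \<Rightarrow> 'a" where
  "phiL \<sigma> s a = \<sigma> a ! (length (\<sigma> a) - length s - 1)"

text \<open>phiR sigma w p b: the letter b' with sigma(b)w in p b' A^* (meaningful on AR sigma w p)\<close>
definition phiR :: "('a \<Rightarrow> 'a list) \<Rightarrow> 'a list \<Rightarrow> 'a list \<Rightarrow> 'a \<Rightarrow> 'a" where
  "phiR \<sigma> w p b = (\<sigma> b @ w) ! length p"

definition TL :: "('a \<Rightarrow> 'a list) \<Rightarrow> 'a list set" where
  "TL \<sigma> = {longest_common_suffix (\<sigma> a) (\<sigma> b) | a b. a \<noteq> b}"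

definition TR :: "('a \<Rightarrow> 'a list) \<Rightarrow> 'a list \<Rightarrow> 'a list set" where
  "TR \<sigma> w = {longest_common_prefix (\<sigma> a @ w) (\<sigma> b @ w) | a b. a \<noteq> b}"

definition order_preserving_on :: "'a set \<Rightarrow> 'a rel \<Rightarrow> 'a rel \<Rightarrow> ('a \<Rightarrow> 'a) \<Rightarrow> bool" where
  "order_preserving_on D r le \<phi> \<longleftrightarrow>
     (\<forall>x\<in>D. \<forall>y\<in>D. (x, y) \<in> r \<and> x \<noteq> y \<longrightarrow> (\<phi> x, \<phi> y) \<in> le)"

definition left_order_preserving :: "('a \<Rightarrow> 'a list) \<Rightarrow> 'a rel \<Rightarrow> 'a rel \<Rightarrow> bool" where
  "left_order_preserving \<sigma> r le \<longleftrightarrow>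
     (\<forall>s\<in>TL \<sigma>. order_preserving_on (AL \<sigma> s) r le (phiL \<sigma> s))"

definition right_order_preserving :: "('a \<Rightarrow> 'a list) \<Rightarrow> 'a list \<Rightarrow> 'a rel \<Rightarrow> 'a rel \<Rightarrow> bool" where
  "right_order_preserving \<sigma> w r le \<longleftrightarrow>
     (\<forall>p\<in>TR \<sigma> w. order_preserving_on (AR \<sigma> w p) r le (phiR \<sigma> w p))"

end

theory Submission
  imports Defs
begin

text \<open>Because \<open>w\<close> occurs in \<open>\<sigma> a @ w\<close> only as a prefix and as a suffix, the images
  \<open>\<sigma> a\<close> form a suffix code and the words \<open>\<sigma> a @ w\<close> a prefix code. So for \<open>a \<noteq> b\<close> the
  reversed images first differ at the letters \<open>phiL \<sigma> s a \<noteq> phiL \<sigma> s b\<close>, where \<open>s\<close> is the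
  longest common suffix of \<open>\<sigma> a\<close> and \<open>\<sigma> b\<close>, and these letters decide the lexicographic
  comparison of the reversed images. Hence \<open>\<sigma>\<close> is left order preserving from \<open>r\<close> iff \<open>r\<close> is
  contained in the pullback along \<open>rev \<circ> \<sigma>\<close> of the lexicographic order induced by \<open>le\<close>;
  this pullback is itself a linear order, hence the unique one. The right-hand case is the
  same with the words \<open>\<sigma> a @ w\<close> compared from the left.\<close>

lemma linear_order_on_subset_eq:
  assumes r: "linear_order_on A r" and r': "linear_order_on A r'" and "r \<subseteq> r'"
  shows "r = r'"
proof
  show "r' \<subseteq> r"
  proof
    fix p assume p: "p \<in> r'"
    obtain a b where ab: "p = (a, b)" by fastforce
    have "a \<in> A" "b \<in> A"
      using r' p ab by (auto simp: order_on_defs)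
    show "p \<in> r"
    proof (cases "a = b")
      case True
      then show ?thesis using r \<open>a \<in> A\<close> ab by (simp add: order_on_defs refl_on_def)
    next
      case False
      have "(b, a) \<notin> r'" using r' p ab False by (auto simp: order_on_defs dest: antisymD)
      then have "(b, a) \<notin> r" using \<open>r \<subseteq> r'\<close> by blast
      then show ?thesis
        using r False \<open>a \<in> A\<close> \<open>b \<in> A\<close> ab by (auto simp: order_on_defs total_on_def)
    qed
  qed
qed (fact assms(3))

definition lex_pullback :: "('a \<Rightarrow> 'b list) \<Rightarrow> 'b rel \<Rightarrow> 'a rel" where
  "lex_pullback g R = {(a, b). a = b \<or> (g a, g b) \<in> lexord R}"

lemma linear_order_lex_pullback:
  assumes R: "strict_linear_order R" and "inj g"
  shows "linear_order_on UNIV (lex_pullback g R)"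
proof -
  have "trans R" "irrefl R" "total R" using R by (auto simp: strict_linear_order_on_def)
  then have trans: "trans (lexord R)" and asym: "asym (lexord R)" and total: "total (lexord R)"
    by (auto intro: lexord_transI lexord_asym total_lexord
        simp: asym_on_iff_irrefl_on_if_trans_on)
  have "(a, b) \<in> lex_pullback g R \<or> (b, a) \<in> lex_pullback g R" for a b
    using total injD[OF \<open>inj g\<close>] by (auto simp: lex_pullback_def total_on_def)
  then show ?thesis
    using trans asym
    unfolding lex_pullback_def order_on_defs refl_on_def antisym_def trans_def total_on_def
    by (auto dest: asymD transD)
qed

lemma ex1_linear_order_preserving_lexord:
  fixes g :: "'a \<Rightarrow> 'a list" and \<phi> :: "'s \<Rightarrow> 'a \<Rightarrow> 'a"
  assumes le: "linear_order_on UNIV le"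
    and separating: "\<And>a b. a \<noteq> b \<Longrightarrow> \<exists>s\<in>T. a \<in> D s \<and> b \<in> D s \<and> \<phi> s a \<noteq> \<phi> s b"
    and compatible: "\<And>s a b. a \<in> D s \<Longrightarrow> b \<in> D s \<Longrightarrow> \<phi> s a \<noteq> \<phi> s b \<Longrightarrow>
          (g a, g b) \<in> lexord (le - Id) \<longleftrightarrow> (\<phi> s a, \<phi> s b) \<in> le - Id"
  shows "\<exists>!r. linear_order_on UNIV r \<and> (\<forall>s\<in>T. order_preserving_on (D s) r le (\<phi> s))"
proof -
  let ?R = "le - Id"
  let ?P = "lex_pullback g ?R"
  have R: "strict_linear_order ?R" using le by (rule strict_linear_order_on_diff_Id)
  then have irrefl: "irrefl (lexord ?R)" and total: "total ?R"
    by (auto simp: strict_linear_order_on_def intro: lexord_irrefl)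
  have "inj g"
  proof (rule injI, rule ccontr)
    fix a b assume "g a = g b" "a \<noteq> b"
    then obtain s where s: "s \<in> T" "a \<in> D s" "b \<in> D s" "\<phi> s a \<noteq> \<phi> s b"
      using separating by blast
    have "(g a, g b) \<notin> lexord ?R" "(g b, g a) \<notin> lexord ?R"
      using irrefl \<open>g a = g b\<close> by (auto simp: irrefl_def)
    then show False
      using compatible[OF s(2,3,4)] compatible[OF s(3,2) s(4)[symmetric]] s(4) total
      by (auto simp: total_on_def)
  qed
  have lin: "linear_order_on UNIV ?P"
    using R \<open>inj g\<close> by (rule linear_order_lex_pullback)
  have preserving_iff: "(\<forall>s\<in>T. order_preserving_on (D s) r le (\<phi> s)) \<longleftrightarrow> r \<subseteq> ?P" for r
  proof
    assume pres: "\<forall>s\<in>T. order_preserving_on (D s) r le (\<phi> s)"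
    show "r \<subseteq> ?P"
    proof (clarify)
      fix a b assume "(a, b) \<in> r"
      show "(a, b) \<in> ?P"
      proof (cases "a = b")
        case False
        then obtain s where s: "s \<in> T" "a \<in> D s" "b \<in> D s" "\<phi> s a \<noteq> \<phi> s b"
          using separating by blast
        then have "(\<phi> s a, \<phi> s b) \<in> le"
          using pres \<open>(a, b) \<in> r\<close> False by (auto simp: order_preserving_on_def)
        then show ?thesis using compatible[OF s(2,3,4)] s(4) by (simp add: lex_pullback_def)
      qed (simp add: lex_pullback_def)
    qed
  next
    assume "r \<subseteq> ?P"
    have "(\<phi> s a, \<phi> s a) \<in> le" for s a
      using le by (simp add: order_on_defs refl_on_def)
    then show "\<forall>s\<in>T. order_preserving_on (D s) r le (\<phi> s)"
      using \<open>r \<subseteq> ?P\<close> compatible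
      by (fastforce simp: order_preserving_on_def lex_pullback_def)
  qed
  show ?thesis
    using lin linear_order_on_subset_eq[OF _ lin] unfolding preserving_iff by blast
qed

lemma return_morphism_occ_at_iff:
  "return_morphism_for \<sigma> w \<Longrightarrow> occ_at w (\<sigma> a @ w) i \<longleftrightarrow> i = 0 \<or> i = length (\<sigma> a)"
  unfolding return_morphism_for_def by blast

lemma return_morphism_letter_inj:
  assumes "return_morphism_for \<sigma> w" and "\<sigma> a = \<sigma> b"
  shows "a = b"
proof -
  have "morph_ext \<sigma> [a] = morph_ext \<sigma> [b]" using \<open>\<sigma> a = \<sigma> b\<close> by (simp add: morph_ext_def)
  then show ?thesis using assms(1) by (auto simp: return_morphism_for_def dest: injD)
qed

lemma return_morphism_suffix_free:
  assumes ret: "return_morphism_for \<sigma> w" and "suffix (\<sigma> a) (\<sigma> b)"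
  shows "a = b"
proof -
  obtain t where t: "\<sigma> b = t @ \<sigma> a" using \<open>suffix (\<sigma> a) (\<sigma> b)\<close> by (auto simp: suffix_def)
  have "take (length w) (\<sigma> a @ w) = w"
    using return_morphism_occ_at_iff[OF ret, of a 0] by (simp add: occ_at_def)
  then have "occ_at w (\<sigma> b @ w) (length t)" by (simp add: occ_at_def t)
  then have "length t = 0 \<or> length t = length (\<sigma> b)"
    using return_morphism_occ_at_iff[OF ret] by blast
  moreover have "\<sigma> a \<noteq> []" using ret by (simp add: return_morphism_for_def)
  ultimately have "\<sigma> a = \<sigma> b" using t by auto
  then show ?thesis by (rule return_morphism_letter_inj[OF ret])
qed

lemma return_morphism_prefix_free:
  assumes ret: "return_morphism_for \<sigma> w" and "prefix (\<sigma> a @ w) (\<sigma> b @ w)"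
  shows "a = b"
proof -
  obtain t where t: "\<sigma> b @ w = \<sigma> a @ w @ t" using \<open>prefix _ _\<close> by (auto simp: prefix_def)
  then have "occ_at w (\<sigma> b @ w) (length (\<sigma> a))" by (simp add: occ_at_def)
  then have "length (\<sigma> a) = 0 \<or> length (\<sigma> a) = length (\<sigma> b)"
    using return_morphism_occ_at_iff[OF ret] by blast
  moreover have "\<sigma> a \<noteq> []" using ret by (simp add: return_morphism_for_def)
  moreover have "length (\<sigma> b) = length (\<sigma> a) + length t" using arg_cong[OF t, of length] by simp
  ultimately have "\<sigma> a = \<sigma> b" using t by auto
  then show ?thesis by (rule return_morphism_letter_inj[OF ret])
qed

lemma return_morphism_parallel_rev:
  "return_morphism_for \<sigma> w \<Longrightarrow> a \<noteq> b \<Longrightarrow> rev (\<sigma> a) \<parallel> rev (\<sigma> b)"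
  by (metis parallelI return_morphism_suffix_free suffix_to_prefix)

lemma return_morphism_parallel:
  "return_morphism_for \<sigma> w \<Longrightarrow> a \<noteq> b \<Longrightarrow> \<sigma> a @ w \<parallel> \<sigma> b @ w"
  by (metis parallelI return_morphism_prefix_free)

lemma longest_common_prefix_at_mismatch:
  "c \<noteq> d \<Longrightarrow> longest_common_prefix (p @ c # x) (p @ d # y) = p"
  by (induction p) auto

lemma TL_separates:
  assumes "rev (\<sigma> a) \<parallel> rev (\<sigma> b)" and "a \<noteq> b"
  shows "\<exists>s\<in>TL \<sigma>. a \<in> AL \<sigma> s \<and> b \<in> AL \<sigma> s \<and> phiL \<sigma> s a \<noteq> phiL \<sigma> s b"
proof -
  obtain p c x d y where "c \<noteq> d" and ra: "rev (\<sigma> a) = p @ c # x" and rb: "rev (\<sigma> b) = p @ d # y"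
    using parallel_decomp[OF assms(1)] by blast
  have a: "\<sigma> a = rev x @ c # rev p" using arg_cong[OF ra, of rev] by simp
  have b: "\<sigma> b = rev y @ d # rev p" using arg_cong[OF rb, of rev] by simp
  have "longest_common_suffix (\<sigma> a) (\<sigma> b) = rev p"
    using longest_common_prefix_at_mismatch[OF \<open>c \<noteq> d\<close>]
    by (simp add: longest_common_suffix_def a b)
  then have "rev p \<in> TL \<sigma>" using \<open>a \<noteq> b\<close> unfolding TL_def by force
  moreover have "a \<in> AL \<sigma> (rev p)" "b \<in> AL \<sigma> (rev p)" using a b by (auto simp: AL_def)
  moreover have "phiL \<sigma> (rev p) a = c" "phiL \<sigma> (rev p) b = d"
    by (simp_all add: phiL_def a b nth_append)
  ultimately show ?thesis using \<open>c \<noteq> d\<close> by auto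
qed

lemma TR_separates:
  assumes "\<sigma> a @ w \<parallel> \<sigma> b @ w" and "a \<noteq> b"
  shows "\<exists>p\<in>TR \<sigma> w. a \<in> AR \<sigma> w p \<and> b \<in> AR \<sigma> w p \<and> phiR \<sigma> w p a \<noteq> phiR \<sigma> w p b"
proof -
  obtain p c x d y where "c \<noteq> d" and a: "\<sigma> a @ w = p @ c # x" and b: "\<sigma> b @ w = p @ d # y"
    using parallel_decomp[OF assms(1)] by blast
  have "longest_common_prefix (\<sigma> a @ w) (\<sigma> b @ w) = p"
    unfolding a b using \<open>c \<noteq> d\<close> by (rule longest_common_prefix_at_mismatch)
  then have "p \<in> TR \<sigma> w" using \<open>a \<noteq> b\<close> unfolding TR_def by force
  moreover have "a \<in> AR \<sigma> w p" "b \<in> AR \<sigma> w p" using a b by (auto simp: AR_def)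
  moreover have "phiR \<sigma> w p a = c" "phiR \<sigma> w p b = d" by (simp_all add: phiR_def a b)
  ultimately show ?thesis using \<open>c \<noteq> d\<close> by auto
qed

lemma ALE:
  assumes "a \<in> AL \<sigma> s"
  obtains u c where "\<sigma> a = u @ c # s"
proof -
  obtain u' where "u' \<noteq> []" and a: "\<sigma> a = u' @ s" using assms unfolding AL_def by blast
  then obtain u c where "u' = u @ [c]" by (cases u' rule: rev_cases) auto
  with a show ?thesis using that by simp
qed

lemma ARE:
  assumes "a \<in> AR \<sigma> w p"
  obtains c u where "\<sigma> a @ w = p @ c # u"
  using assms that unfolding AR_def by (auto simp: neq_Nil_conv)

lemma lexord_rev_iff_phiL:
  assumes "irrefl R" and "a \<in> AL \<sigma> s" and "b \<in> AL \<sigma> s" and "phiL \<sigma> s a \<noteq> phiL \<sigma> s b"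
  shows "(rev (\<sigma> a), rev (\<sigma> b)) \<in> lexord R \<longleftrightarrow> (phiL \<sigma> s a, phiL \<sigma> s b) \<in> R"
proof -
  obtain u c v d where a: "\<sigma> a = u @ c # s" and b: "\<sigma> b = v @ d # s"
    using assms(2,3) by (meson ALE)
  show ?thesis using assms(1,4) by (simp add: a b phiL_def nth_append)
qed

lemma lexord_iff_phiR:
  assumes "irrefl R" and "a \<in> AR \<sigma> w p" and "b \<in> AR \<sigma> w p" and "phiR \<sigma> w p a \<noteq> phiR \<sigma> w p b"
  shows "(\<sigma> a @ w, \<sigma> b @ w) \<in> lexord R \<longleftrightarrow> (phiR \<sigma> w p a, phiR \<sigma> w p b) \<in> R"
proof -
  obtain c u d v where a: "\<sigma> a @ w = p @ c # u" and b: "\<sigma> b @ w = p @ d # v"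
    using assms(2,3) by (meson ARE)
  show ?thesis using assms(1,4) by (simp add: a b phiR_def)
qed

theorem mainTheorem18:
  fixes \<sigma> :: "'a::finite \<Rightarrow> 'a list" and w :: "'a list" and le :: "'a rel"
  assumes "return_morphism_for \<sigma> w"
    and "\<forall>w'. return_morphism_for \<sigma> w' \<longrightarrow> length w' \<le> length w"
    and "linear_order_on UNIV le"
  shows "(\<exists>!r. linear_order_on UNIV r \<and> left_order_preserving \<sigma> r le) \<and>
         (\<exists>!r. linear_order_on UNIV r \<and> right_order_preserving \<sigma> w r le)"
proof
  have irrefl: "irrefl (le - Id)" by (simp add: irrefl_def)
  have "\<exists>s\<in>TL \<sigma>. a \<in> AL \<sigma> s \<and> b \<in> AL \<sigma> s \<and> phiL \<sigma> s a \<noteq> phiL \<sigma> s b"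
    if "a \<noteq> b" for a b
    using TL_separates[OF return_morphism_parallel_rev[OF assms(1) that] that] .
  from ex1_linear_order_preserving_lexord[OF assms(3) this lexord_rev_iff_phiL[OF irrefl, of _ \<sigma>]]
  show "\<exists>!r. linear_order_on UNIV r \<and> left_order_preserving \<sigma> r le"
    unfolding left_order_preserving_def .
  have "\<exists>p\<in>TR \<sigma> w. a \<in> AR \<sigma> w p \<and> b \<in> AR \<sigma> w p \<and> phiR \<sigma> w p a \<noteq> phiR \<sigma> w p b"
    if "a \<noteq> b" for a b
    using TR_separates[OF return_morphism_parallel[OF assms(1) that] that] .
  from ex1_linear_order_preserving_lexord[OF assms(3) this lexord_iff_phiR[OF irrefl, of _ \<sigma> w]]
  show "\<exists>!r. linear_order_on UNIV r \<and> right_order_preserving \<sigma> w r le"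
    unfolding right_order_preserving_def .
qed

end
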